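(* Assume the balanced case $\beta_0=C$, $A>0$ and $\Delta=B^2-4AC<0$; set $p=-B/(2A)$, $q=\sqrt{-\Delta}/(2A)>0$. Then, with the principal branch $\arctan\in(-\pi/2,\pi/2)$ and as an identity of analytic functions for $t$ near $0$ (away from zeros of the cosine), \[ w(x,t)=\exp\bigl[(\alpha_0p+\gamma_0)t\bigr]\left[\frac{q}{\sqrt{(x-p)^2+q^2}\,\cos\bigl(Aqt+\arctan\frac{x-p}{q}\bigr)}\right]^{\alpha_0/A}. \]
   Context: Fix nonnegative integers $a,b,c,\alpha_0,\beta_0,\gamma_0$, $\alpha_k=ak+\alpha_0$, $\beta_k=bk+\beta_0$, $\gamma_k=ck+\gamma_0$; $w_{0,0}=1$, $w_{n,k}=0$ for $k<0$ or $k>n$, $w_{n+1,k}=\alpha_{k-1}w_{n,k-1}+\gamma_k w_{n,k}+\beta_k w_{n,k+1}$. $A=a$, $B=c$, $C=b$; balanced means $\beta_0=C$. $P_n(x)=\sum_k w_{n,k}x^k$, $w(x,t)=\sum_{n\ge0}P_n(x)t^n/n!$. *)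

theory Defs
  imports Complex_Main
begin

fun wtri :: "nat \<Rightarrow> nat \<Rightarrow> nat \<Rightarrow> nat \<Rightarrow> nat \<Rightarrow> nat \<Rightarrow> nat \<Rightarrow> int \<Rightarrow> int" where
  "wtri a b c al0 be0 ga0 0 k = (if k = 0 then 1 else 0)"
| "wtri a b c al0 be0 ga0 (Suc n) k =
     (if k < 0 \<or> k > int (Suc n) then 0
      else (int a * (k - 1) + int al0) * wtri a b c al0 be0 ga0 n (k - 1)
         + (int c * k + int ga0) * wtri a b c al0 be0 ga0 n k
         + (int b * k + int be0) * wtri a b c al0 be0 ga0 n (k + 1))"

definition Ppoly :: "nat \<Rightarrow> nat \<Rightarrow> nat \<Rightarrow> nat \<Rightarrow> nat \<Rightarrow> nat \<Rightarrow> nat \<Rightarrow> real \<Rightarrow> real" where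
  "Ppoly a b c al0 be0 ga0 n x =
     (\<Sum>k\<le>n. real_of_int (wtri a b c al0 be0 ga0 n (int k)) * x ^ k)"

end

theory Submission
  imports Defs
begin

text \<open>
  In the balanced case the recurrence for \<open>w\<close> says
  \<open>P\<^sub>n\<^sub>+\<^sub>1 = (\<alpha>\<^sub>0 y + \<gamma>\<^sub>0) P\<^sub>n + (a y\<^sup>2 + c y + b) P\<^sub>n'\<close>.
  So if \<open>X' = a X\<^sup>2 + c X + b\<close> and \<open>E' = (\<alpha>\<^sub>0 X + \<gamma>\<^sub>0) E\<close>, the chain rule makes
  \<open>E(s) P\<^sub>n(X(s))\<close> the \<open>n\<close>-th derivative of \<open>E\<close>; with \<open>X(0) = x\<close>, \<open>E(0) = 1\<close> the
  exponential generating function of the \<open>P\<^sub>n(x)\<close> is the Taylor series of \<open>E\<close> at 0.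
  It converges to \<open>E\<close> because the \<open>w\<^sub>n\<^sub>,\<^sub>k\<close> are nonnegative, which gives
  \<open>|P\<^sub>n(y)| \<le> n! K\<^sup>n\<close> locally uniformly. For \<open>c\<^sup>2 < 4ab\<close> the Riccati equation is
  solved by \<open>X(s) = p + q tan(a q s + arctan((x - p)/q))\<close>, and then \<open>E\<close> is the stated closed form.
\<close>

lemma wtri_eq_0_outside:
  "k < 0 \<or> k > int n \<Longrightarrow> wtri a b c al0 be0 ga0 n k = 0"
  by (induction n arbitrary: k) auto

lemma wtri_nonneg: "0 \<le> wtri a b c al0 be0 ga0 n k"
proof (induction n arbitrary: k)
  case (Suc n)
  have "0 \<le> (int a * (k - 1) + int al0) * wtri a b c al0 be0 ga0 n (k - 1)" if "k \<ge> 0"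
    using Suc.IH[of "k - 1"] wtri_eq_0_outside[of "k - 1" n] that
    by (cases "k = 0") auto
  then show ?case
    using Suc.IH[of k] Suc.IH[of "k + 1"] by auto
qed simp

definition Ppoly_deriv :: "nat \<Rightarrow> nat \<Rightarrow> nat \<Rightarrow> nat \<Rightarrow> nat \<Rightarrow> nat \<Rightarrow> nat \<Rightarrow> real \<Rightarrow> real" where
  "Ppoly_deriv a b c al0 be0 ga0 n y =
     (\<Sum>k\<le>n. real_of_int (wtri a b c al0 be0 ga0 n (int k)) * (real k * y ^ (k - 1)))"

lemma has_real_derivative_Ppoly:
  "(Ppoly a b c al0 be0 ga0 n has_real_derivative Ppoly_deriv a b c al0 be0 ga0 n y) (at y)"
  unfolding Ppoly_def[abs_def] Ppoly_deriv_def
  by (auto intro!: derivative_eq_intros sum.cong)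

lemma Ppoly_nonneg: "y \<ge> 0 \<Longrightarrow> Ppoly a b c al0 be0 ga0 n y \<ge> 0"
  unfolding Ppoly_def by (intro sum_nonneg) (simp add: wtri_nonneg)

lemma Ppoly_deriv_nonneg: "y \<ge> 0 \<Longrightarrow> Ppoly_deriv a b c al0 be0 ga0 n y \<ge> 0"
  unfolding Ppoly_deriv_def by (intro sum_nonneg) (simp add: wtri_nonneg)

lemma abs_Ppoly_le:
  fixes y :: real
  assumes "\<bar>y\<bar> \<le> z"
  shows "\<bar>Ppoly a b c al0 be0 ga0 n y\<bar> \<le> Ppoly a b c al0 be0 ga0 n z"
proof -
  have "\<bar>Ppoly a b c al0 be0 ga0 n y\<bar>
      \<le> (\<Sum>k\<le>n. real_of_int (wtri a b c al0 be0 ga0 n (int k)) * \<bar>y\<bar> ^ k)"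
    unfolding Ppoly_def
    by (rule order_trans[OF sum_abs]) (simp add: abs_mult power_abs wtri_nonneg)
  also have "\<dots> \<le> Ppoly a b c al0 be0 ga0 n z"
    unfolding Ppoly_def using assms
    by (intro sum_mono mult_left_mono power_mono) (simp_all add: wtri_nonneg)
  finally show ?thesis .
qed

lemma Ppoly_deriv_le:
  fixes y :: real
  assumes "y \<ge> 1"
  shows "Ppoly_deriv a b c al0 be0 ga0 n y \<le> real n * Ppoly a b c al0 be0 ga0 n y"
  unfolding Ppoly_deriv_def Ppoly_def sum_distrib_left
proof (rule sum_mono)
  fix k assume "k \<in> {..n}"
  then have monomial_le: "real k * y ^ (k - 1) \<le> real n * y ^ k"
    using assms by (intro mult_mono power_increasing) auto
  show "real_of_int (wtri a b c al0 be0 ga0 n (int k)) * (real k * y ^ (k - 1))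
      \<le> real n * (real_of_int (wtri a b c al0 be0 ga0 n (int k)) * y ^ k)"
    using mult_left_mono[OF monomial_le, of "real_of_int (wtri a b c al0 be0 ga0 n (int k))"]
    by (simp add: wtri_nonneg mult.left_commute)
qed

text \<open>Here \<open>be0 = b\<close> is essential: then \<open>\<beta>\<^sub>k = b (k + 1)\<close>, exactly the factor that
  differentiating \<open>y\<^sup>k\<^sup>+\<^sup>1\<close> produces.\<close>

lemma Ppoly_Suc:
  fixes y :: real
  shows "Ppoly a b c al0 b ga0 (Suc n) y =
     (real al0 * y + real ga0) * Ppoly a b c al0 b ga0 n y
     + (real a * y\<^sup>2 + real c * y + real b) * Ppoly_deriv a b c al0 b ga0 n y"
proof -
  define W where "W k = real_of_int (wtri a b c al0 b ga0 n k)" for k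
  have W_outside: "W k = 0" if "k < 0 \<or> k > int n" for k
    unfolding W_def using wtri_eq_0_outside[OF that] by simp
  define up where "up k = (real a * (real k - 1) + real al0) * W (int k - 1) * y ^ k" for k
  define stay where "stay k = (real c * real k + real ga0) * W (int k) * y ^ k" for k
  define down where "down k = (real b * real k + real b) * W (int k + 1) * y ^ k" for k
  define down' where "down' k = real b * real k * W (int k) * y ^ (k - 1)" for k
  have "Ppoly a b c al0 b ga0 (Suc n) y
      = (\<Sum>k\<le>Suc n. up k) + (\<Sum>k\<le>Suc n. stay k) + (\<Sum>k\<le>Suc n. down k)"
    unfolding Ppoly_def sum.distrib[symmetric]
    by (rule sum.cong) (auto simp: up_def stay_def down_def W_def algebra_simps)
  also have "(\<Sum>k\<le>Suc n. up k) = (\<Sum>k\<le>n. (real a * real k + real al0) * W (int k) * y ^ Suc k)"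
    unfolding sum.atMost_Suc_shift by (simp add: up_def W_outside)
  also have "(\<Sum>k\<le>Suc n. stay k) = (\<Sum>k\<le>n. stay k)"
    by (simp add: stay_def W_outside)
  also have "(\<Sum>k\<le>Suc n. down k) = (\<Sum>k\<le>n. down k)"
    by (simp add: down_def W_outside)
  also have "\<dots> = (\<Sum>k\<le>Suc n. down' k)"
    unfolding sum.atMost_Suc_shift[of down'] by (simp add: down_def down'_def algebra_simps)
  also have "\<dots> = (\<Sum>k\<le>n. down' k)"
    by (simp add: down'_def W_outside)
  also have "(\<Sum>k\<le>n. (real a * real k + real al0) * W (int k) * y ^ Suc k)
      + (\<Sum>k\<le>n. stay k) + (\<Sum>k\<le>n. down' k)
    = (real al0 * y + real ga0) * Ppoly a b c al0 b ga0 n y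
      + (real a * y\<^sup>2 + real c * y + real b) * Ppoly_deriv a b c al0 b ga0 n y"
    unfolding Ppoly_def Ppoly_deriv_def sum_distrib_left sum.distrib[symmetric]
    by (rule sum.cong)
      (auto simp: stay_def down'_def W_def algebra_simps power2_eq_square power_eq_if)
  finally show ?thesis .
qed

lemma Ppoly_le_fact_power:
  fixes z :: real
  assumes "z \<ge> 1"
  shows "Ppoly a b c al0 b ga0 n z
    \<le> fact n * (real al0 * z + real ga0 + real a * z\<^sup>2 + real c * z + real b) ^ n"
proof (induction n)
  case 0
  then show ?case by (simp add: Ppoly_def)
next
  case (Suc n)
  define K where "K = real al0 * z + real ga0 + real a * z\<^sup>2 + real c * z + real b"
  have linear_le: "0 \<le> real al0 * z + real ga0" "real al0 * z + real ga0 \<le> K"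
    and quadratic_le: "0 \<le> real a * z\<^sup>2 + real c * z + real b" "real a * z\<^sup>2 + real c * z + real b \<le> K"
    and K_nonneg: "0 \<le> K"
    using assms by (auto simp: K_def)
  have P_nonneg: "0 \<le> Ppoly a b c al0 b ga0 n z"
    using assms by (simp add: Ppoly_nonneg)
  have "Ppoly a b c al0 b ga0 (Suc n) z
      \<le> K * Ppoly a b c al0 b ga0 n z + K * (real n * Ppoly a b c al0 b ga0 n z)"
    unfolding Ppoly_Suc using assms linear_le quadratic_le K_nonneg P_nonneg
    by (intro add_mono mult_mono Ppoly_deriv_le Ppoly_deriv_nonneg) auto
  also have "\<dots> = real (Suc n) * K * Ppoly a b c al0 b ga0 n z"
    by (simp add: algebra_simps)
  also have "\<dots> \<le> real (Suc n) * K * (fact n * K ^ n)"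
    using Suc.IH K_nonneg by (intro mult_left_mono) (auto simp: K_def)
  also have "\<dots> = fact (Suc n) * K ^ Suc n"
    by (simp add: algebra_simps)
  finally show ?case unfolding K_def .
qed

lemma Maclaurin_sums_of_fact_bound:
  fixes D :: "nat \<Rightarrow> real \<Rightarrow> real" and R C K t :: real
  assumes deriv: "\<And>m s. \<bar>s\<bar> \<le> R \<Longrightarrow> (D m has_real_derivative D (Suc m) s) (at s)"
    and bound: "\<And>n s. \<bar>s\<bar> \<le> R \<Longrightarrow> \<bar>D n s\<bar> \<le> C * fact n * K ^ n"
    and "K \<ge> 0" and "\<bar>t\<bar> \<le> R" and "K * \<bar>t\<bar> < 1"
  shows "(\<lambda>n. D n 0 / fact n * t ^ n) sums D 0 t"
proof -
  define rem where "rem n = D 0 t - (\<Sum>m<n. D m 0 / fact m * t ^ m)" for n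
  have rem_bound: "\<bar>rem n\<bar> \<le> C * (K * \<bar>t\<bar>) ^ n" for n
  proof -
    obtain s where s: "\<bar>s\<bar> \<le> \<bar>t\<bar>" and rem_eq: "rem n = D n s / fact n * t ^ n"
      using Maclaurin_bi_le[of D "D 0" n t] deriv \<open>\<bar>t\<bar> \<le> R\<close> unfolding rem_def by force
    have "\<bar>D n s\<bar> / fact n * \<bar>t\<bar> ^ n \<le> C * fact n * K ^ n / fact n * \<bar>t\<bar> ^ n"
      using bound[of s n] s \<open>\<bar>t\<bar> \<le> R\<close> by (intro mult_right_mono divide_right_mono) auto
    then show ?thesis
      by (simp add: rem_eq abs_mult power_abs power_mult_distrib)
  qed
  have geometric_to_0: "(\<lambda>n. C * (K * \<bar>t\<bar>) ^ n) \<longlonglongrightarrow> 0"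
    using assms by (intro tendsto_mult_right_zero LIMSEQ_power_zero) auto
  have "(\<lambda>n. \<bar>rem n\<bar>) \<longlonglongrightarrow> 0"
    by (rule tendsto_sandwich[OF _ _ tendsto_const geometric_to_0]) (simp_all add: rem_bound)
  then have "rem \<longlonglongrightarrow> 0"
    by (simp add: tendsto_rabs_zero_iff)
  then have "(\<lambda>n. D 0 t - rem n) \<longlonglongrightarrow> D 0 t - 0"
    by (intro tendsto_intros)
  then show ?thesis
    unfolding sums_def rem_def by simp
qed

lemma has_real_derivative_Ppoly_along_characteristic:
  fixes X E :: "real \<Rightarrow> real"
  assumes "(X has_real_derivative real a * (X s)\<^sup>2 + real c * X s + real b) (at s)"
    and "(E has_real_derivative (real al0 * X s + real ga0) * E s) (at s)"
  shows "((\<lambda>s. E s * Ppoly a b c al0 b ga0 m (X s)) has_real_derivative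
    E s * Ppoly a b c al0 b ga0 (Suc m) (X s)) (at s)"
proof -
  have "((\<lambda>s. Ppoly a b c al0 b ga0 m (X s)) has_real_derivative
      Ppoly_deriv a b c al0 b ga0 m (X s) * (real a * (X s)\<^sup>2 + real c * X s + real b)) (at s)"
    by (rule DERIV_chain2[OF has_real_derivative_Ppoly assms(1)])
  from DERIV_mult[OF assms(2) this] show ?thesis
    unfolding Ppoly_Suc by (simp add: algebra_simps)
qed

lemma isCont_imp_abs_bounded:
  fixes f :: "real \<Rightarrow> real"
  assumes "\<And>s. \<bar>s\<bar> \<le> r \<Longrightarrow> isCont f s"
  obtains M where "\<And>s. \<bar>s\<bar> \<le> r \<Longrightarrow> \<bar>f s\<bar> \<le> M"
proof -
  have "\<forall>s. -r \<le> s \<and> s \<le> r \<longrightarrow> isCont (\<lambda>s. \<bar>f s\<bar>) s"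
    using assms by (auto intro!: continuous_intros)
  then obtain M where "\<forall>s. -r \<le> s \<and> s \<le> r \<longrightarrow> \<bar>f s\<bar> \<le> M"
    using isCont_bounded[of "-r" r "\<lambda>s. \<bar>f s\<bar>"] by (cases "-r \<le> r") auto
  then show ?thesis
    by (intro that[of M]) (simp add: abs_le_iff)
qed

lemma Ppoly_egf_sums_characteristic_weight:
  fixes X E :: "real \<Rightarrow> real" and R :: real
  assumes "R > 0"
    and X_deriv: "\<And>s. \<bar>s\<bar> < R \<Longrightarrow>
      (X has_real_derivative real a * (X s)\<^sup>2 + real c * X s + real b) (at s)"
    and E_deriv: "\<And>s. \<bar>s\<bar> < R \<Longrightarrow>
      (E has_real_derivative (real al0 * X s + real ga0) * E s) (at s)"
    and "X 0 = x" and "E 0 = 1"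
  shows "\<exists>\<delta>>0. \<forall>t. \<bar>t\<bar> < \<delta> \<longrightarrow>
    (\<lambda>n. Ppoly a b c al0 b ga0 n x * t ^ n / fact n) sums E t"
proof -
  define D where "D m = (\<lambda>s. E s * Ppoly a b c al0 b ga0 m (X s))" for m
  define r where "r = R / 2"
  have r: "r > 0" "r < R"
    using \<open>R > 0\<close> by (auto simp: r_def)
  have "isCont X s" "isCont E s" if "\<bar>s\<bar> \<le> r" for s
    using X_deriv[of s] E_deriv[of s] that r by (auto intro: DERIV_isCont)
  then obtain Y C where Y: "\<And>s. \<bar>s\<bar> \<le> r \<Longrightarrow> \<bar>X s\<bar> \<le> Y"
    and C: "\<And>s. \<bar>s\<bar> \<le> r \<Longrightarrow> \<bar>E s\<bar> \<le> C"
    using isCont_imp_abs_bounded[of r X] isCont_imp_abs_bounded[of r E] by metis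
  define Z where "Z = max Y 1"
  define K where "K = real al0 * Z + real ga0 + real a * Z\<^sup>2 + real c * Z + real b"
  have K_nonneg: "K \<ge> 0"
    by (simp add: K_def Z_def)
  have D_bound: "\<bar>D n s\<bar> \<le> C * fact n * K ^ n" if "\<bar>s\<bar> \<le> r" for n s
  proof -
    have "\<bar>Ppoly a b c al0 b ga0 n (X s)\<bar> \<le> Ppoly a b c al0 b ga0 n Z"
      using Y[OF that] by (intro abs_Ppoly_le) (simp add: Z_def)
    also have "\<dots> \<le> fact n * K ^ n"
      unfolding K_def by (intro Ppoly_le_fact_power) (simp add: Z_def)
    finally show ?thesis
      unfolding D_def abs_mult mult.assoc using C[OF that] by (intro mult_mono) simp_all
  qed
  have D_deriv: "(D m has_real_derivative D (Suc m) s) (at s)" if "\<bar>s\<bar> \<le> r" for m s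
    unfolding D_def using that r
    by (auto intro!: has_real_derivative_Ppoly_along_characteristic X_deriv E_deriv)
  define \<delta> where "\<delta> = min r (1 / (K + 1))"
  have "(\<lambda>n. Ppoly a b c al0 b ga0 n x * t ^ n / fact n) sums E t" if "\<bar>t\<bar> < \<delta>" for t
  proof -
    have "K * \<bar>t\<bar> \<le> (K + 1) * \<bar>t\<bar>"
      by (simp add: mult_right_mono)
    also have "\<dots> < 1"
      using that K_nonneg by (simp add: \<delta>_def field_simps)
    finally have "(\<lambda>n. D n 0 / fact n * t ^ n) sums D 0 t"
      using that K_nonneg D_deriv D_bound
      by (intro Maclaurin_sums_of_fact_bound[of r]) (auto simp: \<delta>_def)
    then show ?thesis
      by (simp add: D_def Ppoly_def \<open>X 0 = x\<close> \<open>E 0 = 1\<close>)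
  qed
  moreover have "\<delta> > 0"
    using r K_nonneg by (simp add: \<delta>_def)
  ultimately show ?thesis
    by blast
qed

lemma cos_pos_near_0:
  fixes \<alpha> \<theta> :: real
  assumes "\<alpha> > 0" and "\<bar>\<theta>\<bar> < pi / 2"
  obtains R where "R > 0" and "\<And>s. \<bar>s\<bar> < R \<Longrightarrow> cos (\<alpha> * s + \<theta>) > 0"
proof
  show "(pi / 2 - \<bar>\<theta>\<bar>) / \<alpha> > 0"
    using assms by simp
  fix s assume "\<bar>s\<bar> < (pi / 2 - \<bar>\<theta>\<bar>) / \<alpha>"
  then have "\<bar>\<alpha> * s\<bar> < pi / 2 - \<bar>\<theta>\<bar>"
    using assms by (simp add: abs_mult pos_less_divide_eq mult.commute)
  then show "cos (\<alpha> * s + \<theta>) > 0"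
    by (intro cos_gt_zero_pi) (auto simp: abs_less_iff)
qed

lemma quadratic_eq_vertex_form:
  fixes A B C y :: real
  assumes "A > 0" and "B\<^sup>2 \<le> 4 * A * C"
  shows "A * y\<^sup>2 + B * y + C
    = A * ((y - - B / (2 * A))\<^sup>2 + (sqrt (4 * A * C - B\<^sup>2) / (2 * A))\<^sup>2)"
  using assms by (simp add: power_divide field_simps power2_eq_square)

lemma has_real_derivative_tan_curve:
  fixes \<alpha> \<theta> p q s :: real
  assumes "cos (\<alpha> * s + \<theta>) \<noteq> 0"
  shows "((\<lambda>s. p + q * tan (\<alpha> * s + \<theta>)) has_real_derivative
    \<alpha> * q * (1 + (tan (\<alpha> * s + \<theta>))\<^sup>2)) (at s)"
proof -
  have "((\<lambda>s. p + q * tan (\<alpha> * s + \<theta>)) has_real_derivative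
      q * (inverse ((cos (\<alpha> * s + \<theta>))\<^sup>2) * \<alpha>)) (at s)"
    using assms by (auto intro!: derivative_eq_intros)
  moreover have "inverse ((cos (\<alpha> * s + \<theta>))\<^sup>2) = 1 + (tan (\<alpha> * s + \<theta>))\<^sup>2"
    using assms by (simp add: tan_def field_simps sin_squared_eq)
  ultimately show ?thesis
    by (simp add: algebra_simps)
qed

lemma has_real_derivative_tan_curve_riccati:
  fixes A B C p q \<theta> s :: real
  defines "X \<equiv> \<lambda>s. p + q * tan (A * q * s + \<theta>)"
  assumes "A > 0" and "B\<^sup>2 < 4 * A * C"
    and p: "p = - B / (2 * A)" and q: "q = sqrt (4 * A * C - B\<^sup>2) / (2 * A)"
    and "cos (A * q * s + \<theta>) \<noteq> 0"
  shows "(X has_real_derivative A * (X s)\<^sup>2 + B * X s + C) (at s)"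
proof -
  have vertex: "A * y\<^sup>2 + B * y + C = A * ((y - p)\<^sup>2 + q\<^sup>2)" for y
    unfolding p q using assms by (intro quadratic_eq_vertex_form) auto
  have "(X has_real_derivative A * q * q * (1 + (tan (A * q * s + \<theta>))\<^sup>2)) (at s)"
    unfolding X_def using assms(6) by (rule has_real_derivative_tan_curve)
  then show ?thesis
    unfolding vertex by (simp add: X_def algebra_simps power2_eq_square)
qed

lemma has_real_derivative_sec_powr:
  fixes \<alpha> \<theta> k r s :: real
  assumes "k > 0" and "cos (\<alpha> * s + \<theta>) > 0"
  shows "((\<lambda>s. (k / cos (\<alpha> * s + \<theta>)) powr r) has_real_derivative
    r * \<alpha> * tan (\<alpha> * s + \<theta>) * (k / cos (\<alpha> * s + \<theta>)) powr r) (at s)"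
proof -
  have "((\<lambda>s. k / cos (\<alpha> * s + \<theta>)) has_real_derivative
      k / cos (\<alpha> * s + \<theta>) * (\<alpha> * tan (\<alpha> * s + \<theta>))) (at s)"
    using assms by (auto intro!: derivative_eq_intros simp: tan_def field_simps power2_eq_square)
  from DERIV_powr[OF this _ DERIV_const[of r]] show ?thesis
    using assms by (simp add: field_simps)
qed

lemma has_real_derivative_tan_curve_weight:
  fixes A \<alpha> \<gamma> k p q \<theta> s :: real
  defines "E \<equiv> \<lambda>s. exp ((\<alpha> * p + \<gamma>) * s) * (k / cos (A * q * s + \<theta>)) powr (\<alpha> / A)"
  assumes "A > 0" and "k > 0" and "cos (A * q * s + \<theta>) > 0"
  shows "(E has_real_derivative (\<alpha> * (p + q * tan (A * q * s + \<theta>)) + \<gamma>) * E s) (at s)"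
proof -
  have "((\<lambda>s. exp ((\<alpha> * p + \<gamma>) * s)) has_real_derivative
      (\<alpha> * p + \<gamma>) * exp ((\<alpha> * p + \<gamma>) * s)) (at s)"
    by (auto intro!: derivative_eq_intros)
  from DERIV_mult[OF this has_real_derivative_sec_powr[OF assms(3,4), where r = "\<alpha> / A"]]
  show ?thesis
    using \<open>A > 0\<close> by (simp add: E_def algebra_simps)
qed

lemma cos_arctan_div:
  fixes y q :: real
  assumes "q > 0"
  shows "cos (arctan (y / q)) = q / sqrt (y\<^sup>2 + q\<^sup>2)"
proof -
  have "1 + (y / q)\<^sup>2 = (y\<^sup>2 + q\<^sup>2) / q\<^sup>2"
    using assms by (simp add: field_simps power_divide)
  then show ?thesis
    using assms by (simp add: cos_arctan real_sqrt_divide)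
qed

theorem mainTheorem9:
  fixes a b c al0 be0 ga0 :: nat and x :: real
  assumes balanced: "be0 = b"
    and Apos: "a > 0"
    and Delta_neg: "real c ^ 2 - 4 * real a * real b < 0"
  defines "p \<equiv> - real c / (2 * real a)"
    and "q \<equiv> sqrt (4 * real a * real b - real c ^ 2) / (2 * real a)"
  shows "\<exists>\<delta>>0. \<forall>t::real. \<bar>t\<bar> < \<delta> \<longrightarrow>
     (\<lambda>n. Ppoly a b c al0 be0 ga0 n x * t ^ n / fact n) sums
       (exp ((real al0 * p + real ga0) * t) *
        (q / (sqrt ((x - p)^2 + q^2) * cos (real a * q * t + arctan ((x - p) / q))))
          powr (real al0 / real a))"
proof -
  define \<theta> where "\<theta> = arctan ((x - p) / q)"
  define k where "k = q / sqrt ((x - p)\<^sup>2 + q\<^sup>2)"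
  define X where "X s = p + q * tan (real a * q * s + \<theta>)" for s
  define E where "E s = exp ((real al0 * p + real ga0) * s)
    * (k / cos (real a * q * s + \<theta>)) powr (real al0 / real a)" for s
  have q_pos: "q > 0" and k_pos: "k > 0"
    using Apos Delta_neg by (simp_all add: q_def k_def add_nonneg_pos)
  moreover have "\<bar>\<theta>\<bar> < pi / 2"
    using arctan_bounded[of "(x - p) / q"] by (auto simp: \<theta>_def abs_less_iff)
  ultimately obtain R where "R > 0" and cos_pos: "\<And>s. \<bar>s\<bar> < R \<Longrightarrow> cos (real a * q * s + \<theta>) > 0"
    using cos_pos_near_0[of "real a * q" \<theta>] Apos by auto
  have "(X has_real_derivative real a * (X s)\<^sup>2 + real c * X s + real b) (at s)" if "\<bar>s\<bar> < R" for s
    unfolding X_def[abs_def] using Apos Delta_neg p_def q_def cos_pos[OF that]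
    by (intro has_real_derivative_tan_curve_riccati) auto
  moreover have "(E has_real_derivative (real al0 * X s + real ga0) * E s) (at s)" if "\<bar>s\<bar> < R" for s
    using has_real_derivative_tan_curve_weight[OF _ k_pos cos_pos[OF that]] Apos
    by (simp add: E_def[abs_def] X_def)
  moreover have "X 0 = x" and "E 0 = 1"
    using q_pos by (simp_all add: X_def E_def \<theta>_def k_def cos_arctan_div tan_arctan)
  ultimately have "\<exists>\<delta>>0. \<forall>t. \<bar>t\<bar> < \<delta> \<longrightarrow>
      (\<lambda>n. Ppoly a b c al0 b ga0 n x * t ^ n / fact n) sums E t"
    by (rule Ppoly_egf_sums_characteristic_weight[OF \<open>R > 0\<close>])
  then show ?thesis
    by (simp add: balanced E_def k_def \<theta>_def)
qed

end
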